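(* Let $a_2>1$ and let $Y^{(1)},Y^{(2)}$ be independent $\chi^2_1$ random variables, and let $h$ be the density of $U=Y^{(1)}+a_2Y^{(2)}$. With $c_2=1-a_2^{-1}$, $p_0=a_2^{-1/2}$, $p_1=\tfrac12c_2p_0$, $p_2=\tfrac38c_2^2p_0$, one has $$\lim_{u\to0+}\big[h(u)h''(u)-\{h'(u)\}^2\big]=\frac{p_0p_2-p_1^2}{16}>0,$$ so $h$ is not log-concave on $(0,\infty)$, although the cdf of $U$ is. *)

theory Defs
  imports "HOL-Analysis.Analysis"
begin

definition chi2_1_density :: "real \<Rightarrow> real" where
  "chi2_1_density y = (if y > 0 then exp (- y / 2) / sqrt (2 * pi * y) else 0)"

definition scaled_chi2_1_density :: "real \<Rightarrow> real \<Rightarrow> real" where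
  "scaled_chi2_1_density a y = chi2_1_density (y / a) / a"

definition U_density :: "real \<Rightarrow> real \<Rightarrow> real" where
  "U_density a2 u = (\<integral>t. chi2_1_density t * scaled_chi2_1_density a2 (u - t) \<partial>lborel)"

definition U_cdf :: "real \<Rightarrow> real \<Rightarrow> real" where
  "U_cdf a2 u = (LINT t:{..u}|lborel. U_density a2 t)"

definition log_concave_on :: "real set \<Rightarrow> (real \<Rightarrow> real) \<Rightarrow> bool" where
  "log_concave_on S f \<longleftrightarrow> (\<forall>x\<in>S. f x \<ge> 0) \<and>
     (\<forall>x\<in>S. \<forall>y\<in>S. \<forall>l::real. 0 \<le> l \<and> l \<le> 1 \<longrightarrow>
        f (l * x + (1 - l) * y) \<ge> f x powr l * f y powr (1 - l))"

end

theory Submission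
  imports Defs
begin

text \<open>After the substitution \<open>t = u (1 - cos \<phi>) / 2\<close>, the density \<open>h\<close> of \<open>U\<close> becomes, for \<open>u > 0\<close>,
  \<open>(2 \<pi> \<surd>a)\<^sup>-\<^sup>1 \<integral>\<^sub>0\<^sup>\<pi> exp (- u w(\<phi>)) d\<phi>\<close> with \<open>w\<close> affine in \<open>cos \<phi>\<close>. This Laplace-type integral
  is smooth on all of \<open>\<real>\<close>, so the Turan expression \<open>h h'' - h'\<^sup>2\<close> extends continuously to \<open>0\<close>,
  where it equals \<open>(2 \<pi> \<surd>a)\<^sup>-\<^sup>2 \<pi>\<^sup>2\<close> times the variance of \<open>w\<close> under the uniform distribution
  on \<open>[0, \<pi>]\<close>; this is positive because \<open>w\<close> is not constant when \<open>a \<noteq> 1\<close>. Hence \<open>ln h\<close> is strictly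
  convex near \<open>0\<close>. The cdf, on the other hand, has the decreasing derivative \<open>h\<close> (as \<open>w \<ge> 0\<close>), so it
  is concave, and positive concave functions are log-concave.\<close>

section \<open>Log-concavity and the Turan expression\<close>

lemma log_concave_on_subset:
  "log_concave_on S f \<Longrightarrow> T \<subseteq> S \<Longrightarrow> log_concave_on T f"
  unfolding log_concave_on_def by blast

lemma log_concave_on_imp_concave_ln:
  assumes lc: "log_concave_on S f" and "convex S" and pos: "\<And>x. x \<in> S \<Longrightarrow> f x > 0"
  shows "concave_on S (\<lambda>x. ln (f x))"
  unfolding concave_on_iff
proof (intro conjI ballI allI impI)
  fix x y l v :: real
  assume xy: "x \<in> S" "y \<in> S" and l: "0 \<le> l" "0 \<le> v" "l + v = 1"
  then have v: "v = 1 - l" by simp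
  have "f x powr l * f y powr (1 - l) \<le> f (l * x + (1 - l) * y)"
    using lc xy l unfolding log_concave_on_def v by simp
  moreover have "0 < f x powr l * f y powr (1 - l)"
    using pos[OF xy(1)] pos[OF xy(2)] by simp
  ultimately have "ln (f x powr l * f y powr (1 - l)) \<le> ln (f (l * x + (1 - l) * y))"
    by simp
  then show "l * ln (f x) + v * ln (f y) \<le> ln (f (l *\<^sub>R x + v *\<^sub>R y))"
    using pos[OF xy(1)] pos[OF xy(2)] unfolding v by (simp add: ln_mult ln_powr)
qed (fact \<open>convex S\<close>)

lemma concave_on_imp_log_concave_on:
  assumes conc: "concave_on S f" and pos: "\<And>x. x \<in> S \<Longrightarrow> f x > 0"
  shows "log_concave_on S f"
  unfolding log_concave_on_def
proof (intro conjI ballI allI impI)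
  fix x y and l :: real
  assume xy: "x \<in> S" "y \<in> S" and l: "0 \<le> l \<and> l \<le> 1"
  have "f x powr l * f y powr (1 - l) \<le> l * f x + (1 - l) * f y"
    by (rule Youngs_inequality_0) (use l pos xy in auto)
  also have "\<dots> \<le> f (l * x + (1 - l) * y)"
    using concave_onD[OF conc, of "1 - l" x y] l xy by simp
  finally show "f x powr l * f y powr (1 - l) \<le> f (l * x + (1 - l) * y)" .
qed (use pos in \<open>simp add: less_imp_le\<close>)

lemma midpoint_less_if_second_deriv_pos:
  fixes g g' g'' :: "real \<Rightarrow> real"
  assumes "x < y"
    and g: "\<And>t. t \<in> {x..y} \<Longrightarrow> (g has_real_derivative g' t) (at t)"
    and g': "\<And>t. t \<in> {x..y} \<Longrightarrow> (g' has_real_derivative g'' t) (at t)"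
    and pos: "\<And>t. t \<in> {x..y} \<Longrightarrow> g'' t > 0"
  shows "2 * g ((x + y) / 2) < g x + g y"
proof -
  define m where "m = (x + y) / 2"
  have m: "x < m" "m < y" "m - x = (y - x) / 2" "y - m = (y - x) / 2"
    using \<open>x < y\<close> unfolding m_def by (auto simp: field_simps)
  obtain z1 where z1: "x < z1" "z1 < m" "g m - g x = (m - x) * g' z1"
    using MVT2[OF m(1), of g g'] g m by (metis atLeastAtMost_iff less_eq_real_def order.strict_trans)
  obtain z2 where z2: "m < z2" "z2 < y" "g y - g m = (y - m) * g' z2"
    using MVT2[OF m(2), of g g'] g m by (metis atLeastAtMost_iff less_eq_real_def order.strict_trans1)
  have "g' z1 < g' z2"
  proof (rule DERIV_pos_imp_increasing[where f = g'])
    fix t assume "z1 \<le> t" "t \<le> z2"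
    then have "t \<in> {x..y}" using z1 z2 m by simp
    then show "\<exists>d. (g' has_real_derivative d) (at t) \<and> 0 < d" using g' pos by blast
  qed (use z1 z2 in simp)
  then have "(y - x) / 2 * g' z1 < (y - x) / 2 * g' z2"
    using \<open>x < y\<close> by (intro mult_strict_left_mono) auto
  then have "g m - g x < g y - g m"
    using z1(3) z2(3) unfolding m(3,4) by linarith
  then show ?thesis unfolding m_def by simp
qed

lemma not_log_concave_on_if_Turan_pos:
  fixes f f' f'' :: "real \<Rightarrow> real"
  assumes "x < y" "{x..y} \<subseteq> S"
    and pos: "\<And>t. t \<in> {x..y} \<Longrightarrow> f t > 0"
    and f: "\<And>t. t \<in> {x..y} \<Longrightarrow> (f has_real_derivative f' t) (at t)"
    and f': "\<And>t. t \<in> {x..y} \<Longrightarrow> (f' has_real_derivative f'' t) (at t)"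
    and Turan: "\<And>t. t \<in> {x..y} \<Longrightarrow> f t * f'' t - (f' t)\<^sup>2 > 0"
  shows "\<not> log_concave_on S f"
proof
  assume "log_concave_on S f"
  then have "concave_on {x..y} (\<lambda>t. ln (f t))"
    using log_concave_on_subset assms(2) pos by (blast intro: log_concave_on_imp_concave_ln)
  then have "ln (f x) + ln (f y) \<le> 2 * ln (f ((x + y) / 2))"
    using concave_onD[of "{x..y}" "\<lambda>t. ln (f t)" "1/2" x y] \<open>x < y\<close> by (simp add: field_simps)
  moreover have "2 * ln (f ((x + y) / 2)) < ln (f x) + ln (f y)"
  proof (rule midpoint_less_if_second_deriv_pos[OF \<open>x < y\<close>])
    fix t assume t: "t \<in> {x..y}"
    show "((\<lambda>t. ln (f t)) has_real_derivative f' t / f t) (at t)"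
      using t pos[OF t] f by (auto intro!: derivative_eq_intros)
    show "((\<lambda>t. f' t / f t) has_real_derivative (f t * f'' t - (f' t)\<^sup>2) / (f t)\<^sup>2) (at t)"
      using t pos[OF t] f f' by (auto intro!: derivative_eq_intros simp: power2_eq_square algebra_simps)
    show "(f t * f'' t - (f' t)\<^sup>2) / (f t)\<^sup>2 > 0"
      using pos[OF t] Turan[OF t] by simp
  qed
  ultimately show False by simp
qed

section \<open>The density of \<open>U\<close> as a Laplace-type integral\<close>

text \<open>\<open>U_rate a \<phi>\<close> is the exponent \<open>t/2 + (u - t)/(2a)\<close> of the integrand divided by \<open>u\<close>; the
  Jacobian \<open>u sin \<phi> / 2\<close> cancels the singular factor \<open>(t (u - t))\<^sup>-\<^sup>1\<^sup>/\<^sup>2\<close>. \<open>U_laplace a k\<close> is the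
  \<open>k\<close>-th derivative of the resulting integral.\<close>

definition U_rate :: "real \<Rightarrow> real \<Rightarrow> real" where
  "U_rate a \<phi> = 1 / (2 * a) + (1 - 1 / a) * (1 - cos \<phi>) / 4"

definition U_laplace :: "real \<Rightarrow> nat \<Rightarrow> real \<Rightarrow> real" where
  "U_laplace a k u = integral {0..pi} (\<lambda>\<phi>. (- U_rate a \<phi>) ^ k * exp (- (u * U_rate a \<phi>)))"

lemma continuous_on_U_rate [continuous_intros]:
  "continuous_on S (f :: 'b::t2_space \<Rightarrow> real) \<Longrightarrow> continuous_on S (\<lambda>x. U_rate a (f x))"
  unfolding U_rate_def by (auto intro!: continuous_intros)

lemma U_rate_nonneg: "a \<ge> 1 \<Longrightarrow> 0 \<le> U_rate a \<phi>"
  unfolding U_rate_def by (auto intro!: add_nonneg_nonneg mult_nonneg_nonneg)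

lemma U_rate_le_1:
  assumes "a \<ge> 1" shows "U_rate a \<phi> \<le> 1"
proof -
  have "(1 - 1 / a) * (1 - cos \<phi>) \<le> (1 - 1 / a) * 2"
    using assms by (intro mult_left_mono) auto
  then have "(1 - 1 / a) * (1 - cos \<phi>) / 4 \<le> (1 - 1 / a) * 2 / 4"
    by (rule divide_right_mono) simp
  moreover have "1 / (2 * a) + (1 - 1 / a) * 2 / 4 = 1 / 2"
    using assms by (simp add: field_simps)
  ultimately show ?thesis
    unfolding U_rate_def by linarith
qed

lemma U_laplace_has_real_derivative:
  "(U_laplace a k has_real_derivative U_laplace a (Suc k) u) (at u)"
proof -
  have "((\<lambda>u. integral (cbox 0 pi) (\<lambda>\<phi>. (- U_rate a \<phi>) ^ k * exp (- (u * U_rate a \<phi>))))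
          has_field_derivative
        integral (cbox 0 pi) (\<lambda>\<phi>. (- U_rate a \<phi>) ^ Suc k * exp (- (u * U_rate a \<phi>))))
        (at u within UNIV)"
  proof (rule leibniz_rule_field_derivative)
    show "((\<lambda>x. (- U_rate a \<phi>) ^ k * exp (- (x * U_rate a \<phi>))) has_field_derivative
           (- U_rate a \<phi>) ^ Suc k * exp (- (x * U_rate a \<phi>))) (at x within UNIV)" for x \<phi>
      by (auto intro!: derivative_eq_intros)
    show "(\<lambda>\<phi>. (- U_rate a \<phi>) ^ k * exp (- (x * U_rate a \<phi>))) integrable_on cbox 0 pi" for x
      by (intro integrable_continuous continuous_intros)
    show "continuous_on (UNIV \<times> cbox 0 pi)
            (\<lambda>(x, \<phi>). (- U_rate a \<phi>) ^ Suc k * exp (- (x * U_rate a \<phi>)))"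
      by (auto simp: split_beta intro!: continuous_intros)
  qed auto
  then show ?thesis
    unfolding U_laplace_def by (simp del: power_Suc)
qed

lemma isCont_U_laplace [continuous_intros]: "isCont (U_laplace a k) u"
  using U_laplace_has_real_derivative DERIV_isCont by blast

lemma continuous_on_U_laplace [continuous_intros]: "continuous_on S (U_laplace a k)"
  using isCont_U_laplace continuous_at_imp_continuous_on by blast

lemma U_laplace_0_lower_bound:
  assumes "a \<ge> 1" shows "pi * exp (- \<bar>u\<bar>) \<le> U_laplace a 0 u"
proof -
  have "integral {0..pi} (\<lambda>\<phi>. exp (- \<bar>u\<bar>)) \<le> integral {0..pi} (\<lambda>\<phi>. exp (- (u * U_rate a \<phi>)))"
  proof (rule integral_le)
    fix \<phi>
    have "\<bar>u * U_rate a \<phi>\<bar> \<le> \<bar>u\<bar>"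
      using U_rate_nonneg[OF assms] U_rate_le_1[OF assms] by (simp add: abs_mult mult_left_le)
    then show "exp (- \<bar>u\<bar>) \<le> exp (- (u * U_rate a \<phi>))"
      by simp
  qed (auto intro!: integrable_continuous_interval continuous_intros)
  then show ?thesis
    unfolding U_laplace_def by (simp add: mult.commute)
qed

lemma U_laplace_0_pos: "a \<ge> 1 \<Longrightarrow> 0 < U_laplace a 0 u"
  using U_laplace_0_lower_bound[of a u] by (smt (verit) exp_gt_zero mult_pos_pos pi_gt_zero)

lemma U_laplace_1_nonpos:
  assumes "a \<ge> 1" shows "U_laplace a 1 u \<le> 0"
proof -
  have "integral {0..pi} (\<lambda>\<phi>. (- U_rate a \<phi>) ^ 1 * exp (- (u * U_rate a \<phi>))) \<le> integral {0..pi} (\<lambda>\<phi>. 0)"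
    using U_rate_nonneg[OF assms]
    by (intro integral_le) (auto intro!: integrable_continuous_interval continuous_intros)
  then show ?thesis
    unfolding U_laplace_def by simp
qed

lemma cos_has_integral_0_pi: "(cos has_integral 0) {0..pi}"
proof -
  have "(cos has_integral (sin pi - sin 0)) {0..pi}"
    by (rule fundamental_theorem_of_calculus)
       (auto intro!: derivative_eq_intros simp flip: has_real_derivative_iff_has_vector_derivative)
  then show ?thesis by simp
qed

lemma cos_power2_has_integral_0_pi: "((\<lambda>\<phi>. (cos \<phi>)\<^sup>2) has_integral pi / 2) {0..pi}"
proof -
  define F where "F \<phi> = (\<phi> + sin \<phi> * cos \<phi>) / 2" for \<phi> :: real
  have "((\<lambda>\<phi>. (cos \<phi>)\<^sup>2) has_integral (F pi - F 0)) {0..pi}"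
  proof (rule fundamental_theorem_of_calculus)
    fix \<phi> :: real
    have "(F has_real_derivative (1 + (cos \<phi> * cos \<phi> - sin \<phi> * sin \<phi>)) / 2) (at \<phi> within {0..pi})"
      unfolding F_def by (auto intro!: derivative_eq_intros)
    moreover have "(1 + (cos \<phi> * cos \<phi> - sin \<phi> * sin \<phi>)) / 2 = (cos \<phi>)\<^sup>2"
      using sin_squared_eq[of \<phi>] by (simp add: power2_eq_square)
    ultimately show "(F has_vector_derivative (cos \<phi>)\<^sup>2) (at \<phi> within {0..pi})"
      by (simp flip: has_real_derivative_iff_has_vector_derivative)
  qed auto
  then show ?thesis
    unfolding F_def by simp
qed

lemma integral_quadratic_cos_0_pi:
  "integral {0..pi} (\<lambda>\<phi>. c0 + c1 * cos \<phi> + c2 * (cos \<phi>)\<^sup>2) = c0 * pi + c2 * (pi / 2)"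
proof -
  have "((\<lambda>\<phi>. c0 + c1 * cos \<phi> + c2 * (cos \<phi>)\<^sup>2) has_integral (c0 * pi + c1 * 0 + c2 * (pi / 2))) {0..pi}"
    using has_integral_const_real[of c0 0 pi]
      has_integral_mult_right[OF cos_has_integral_0_pi, of c1]
      has_integral_mult_right[OF cos_power2_has_integral_0_pi, of c2]
    by (intro has_integral_add) (simp_all add: mult.commute)
  then show ?thesis
    by (simp add: integral_unique)
qed

lemma U_laplace_Turan_at_0:
  assumes "a > 0"
  shows "U_laplace a 0 0 * U_laplace a 2 0 - (U_laplace a 1 0)\<^sup>2 = ((1 - 1 / a) / 4)\<^sup>2 * pi\<^sup>2 / 2"
proof -
  define A B where "A = 1 / (2 * a) + (1 - 1 / a) / 4" and "B = (1 - 1 / a) / 4"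
  have rate: "U_rate a \<phi> = A - B * cos \<phi>" for \<phi>
    using assms unfolding U_rate_def A_def B_def by (simp add: field_simps)
  have "U_laplace a 0 0 = integral {0..pi} (\<lambda>\<phi>. 1 + 0 * cos \<phi> + 0 * (cos \<phi>)\<^sup>2)"
    unfolding U_laplace_def by simp
  moreover have "U_laplace a 1 0 = integral {0..pi} (\<lambda>\<phi>. - A + B * cos \<phi> + 0 * (cos \<phi>)\<^sup>2)"
    unfolding U_laplace_def rate by simp
  moreover have "U_laplace a 2 0 = integral {0..pi} (\<lambda>\<phi>. A\<^sup>2 + (- 2 * A * B) * cos \<phi> + B\<^sup>2 * (cos \<phi>)\<^sup>2)"
    unfolding U_laplace_def rate by (simp add: power2_eq_square algebra_simps)
  ultimately have "U_laplace a 0 0 * U_laplace a 2 0 - (U_laplace a 1 0)\<^sup>2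
      = pi * (A\<^sup>2 * pi + B\<^sup>2 * (pi / 2)) - (- A * pi)\<^sup>2"
    unfolding integral_quadratic_cos_0_pi by simp
  also have "\<dots> = B\<^sup>2 * pi\<^sup>2 / 2"
    by (simp add: power2_eq_square algebra_simps)
  finally show ?thesis
    unfolding B_def .
qed

lemma chi2_1_density_nonneg: "0 \<le> chi2_1_density y"
  unfolding chi2_1_density_def by auto

lemma U_integrand_eq_0:
  assumes "a > 0" "t \<le> 0 \<or> u \<le> t"
  shows "chi2_1_density t * scaled_chi2_1_density a (u - t) = 0"
  using assms divide_nonpos_pos[of "u - t" a]
  unfolding scaled_chi2_1_density_def chi2_1_density_def by auto

lemma U_density_eq_0:
  assumes "a > 0" "u \<le> 0" shows "U_density a u = 0"
proof -
  have "t \<le> 0 \<or> u \<le> t" for t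
    using assms(2) by linarith
  then have "(\<lambda>t. chi2_1_density t * scaled_chi2_1_density a (u - t)) = (\<lambda>t. 0)"
    using U_integrand_eq_0[OF assms(1)] by blast
  then show ?thesis
    unfolding U_density_def by simp
qed

lemma U_density_eq_interval_integral:
  assumes "a > 0" "u > 0"
  shows "U_density a u = (LBINT t=0..u. chi2_1_density t * scaled_chi2_1_density a (u - t))"
proof -
  let ?f = "\<lambda>t. chi2_1_density t * scaled_chi2_1_density a (u - t)"
  have "?f t = indicator {0<..<u} t *\<^sub>R ?f t" for t
  proof (cases "t \<in> {0<..<u}")
    case False
    then show ?thesis
      using U_integrand_eq_0[OF assms(1), of t u] by auto
  qed simp
  then have "(LBINT t:{0<..<u}. ?f t) = (LBINT t. ?f t)"
    unfolding set_lebesgue_integral_def by (metis (no_types))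
  then show ?thesis
    using assms(2) unfolding U_density_def by (simp add: interval_lebesgue_integral_le_eq zero_ereal_def)
qed

lemma isCont_U_integrand:
  assumes "a > 0" "0 < t" "t < u"
  shows "isCont (\<lambda>t. chi2_1_density t * scaled_chi2_1_density a (u - t)) t"
proof -
  let ?g = "\<lambda>t. exp (- t / 2) / sqrt (2 * pi * t) *
                 (exp (- ((u - t) / a) / 2) / sqrt (2 * pi * ((u - t) / a)) / a)"
  have "\<forall>\<^sub>F s in nhds t. s \<in> {0<..<u}"
    using assms by (intro eventually_nhds_in_open) auto
  then have "\<forall>\<^sub>F s in nhds t. chi2_1_density s * scaled_chi2_1_density a (u - s) = ?g s"
    by eventually_elim (use assms(1) in \<open>simp add: scaled_chi2_1_density_def chi2_1_density_def\<close>)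
  moreover have "isCont ?g t"
    using assms by (intro continuous_intros) auto
  ultimately show ?thesis
    by (simp add: isCont_cong)
qed

lemma sqrt_product_arc_substitution:
  assumes "a > 0" "t = u * (1 - cos \<phi>) / 2" "s = u * sin \<phi> / 2" "s > 0"
  shows "sqrt (2 * pi * t) * sqrt (2 * pi * ((u - t) / a)) = 2 * pi * s / sqrt a"
proof -
  have "t * (u - t) = u\<^sup>2 * (1 - (cos \<phi>)\<^sup>2) / 4"
    unfolding assms(2) by (simp add: power2_eq_square field_simps)
  also have "\<dots> = s\<^sup>2"
    unfolding assms(3) sin_squared_eq[symmetric] by (simp add: power_mult_distrib power_divide)
  finally have ts: "t * (u - t) = s\<^sup>2" .
  have "sqrt (2 * pi * t) * sqrt (2 * pi * ((u - t) / a)) = sqrt ((2 * pi)\<^sup>2 * (t * (u - t)) / a)"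
    by (simp add: real_sqrt_mult[symmetric] power2_eq_square field_simps)
  also have "\<dots> = sqrt ((2 * pi * s)\<^sup>2) / sqrt a"
    unfolding ts by (simp add: real_sqrt_divide power_mult_distrib)
  also have "\<dots> = 2 * pi * s / sqrt a"
    using assms(4) by simp
  finally show ?thesis .
qed

lemma arc_substitution_range:
  assumes "u > 0" "0 < \<phi>" "\<phi> < pi"
  shows "0 < u * (1 - cos \<phi>) / 2" "u * (1 - cos \<phi>) / 2 < u"
proof -
  have "cos \<phi> < 1" "-1 < cos \<phi>"
    using assms cos_monotone_0_pi[of 0 \<phi>] cos_monotone_0_pi[of \<phi> pi] by auto
  then show "0 < u * (1 - cos \<phi>) / 2" "u * (1 - cos \<phi>) / 2 < u"
    using assms(1) mult_pos_pos[of u "1 - cos \<phi>"] mult_pos_pos[of u "1 + cos \<phi>"]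
    by (auto simp: field_simps)
qed

lemma U_integrand_arc_substitution:
  assumes "a > 0" "u > 0" "0 < \<phi>" "\<phi> < pi"
  shows "chi2_1_density (u * (1 - cos \<phi>) / 2) * scaled_chi2_1_density a (u - u * (1 - cos \<phi>) / 2)
           * (u * sin \<phi> / 2)
       = exp (- (u * U_rate a \<phi>)) / (2 * pi * sqrt a)"
proof -
  define t s where "t = u * (1 - cos \<phi>) / 2" and "s = u * sin \<phi> / 2"
  have "sin \<phi> > 0"
    using assms sin_gt_zero by auto
  then have s: "s > 0"
    unfolding s_def using assms by simp
  have t: "t > 0" "(u - t) / a > 0"
    using arc_substitution_range[OF assms(2-4)] assms(1) unfolding t_def by auto
  have e: "exp (- t / 2) * exp (- ((u - t) / a) / 2) = exp (- (u * U_rate a \<phi>))"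
    unfolding exp_add[symmetric] t_def U_rate_def using assms(1) by (simp add: field_simps)
  have "chi2_1_density t * scaled_chi2_1_density a (u - t) * s
      = exp (- t / 2) * exp (- ((u - t) / a) / 2) * s
        / (sqrt (2 * pi * t) * sqrt (2 * pi * ((u - t) / a)) * a)"
    unfolding scaled_chi2_1_density_def chi2_1_density_def using t by simp
  also have "\<dots> = exp (- (u * U_rate a \<phi>)) * s / (2 * pi * s / sqrt a * a)"
    unfolding e sqrt_product_arc_substitution[OF assms(1) t_def s_def s] ..
  also have "\<dots> = exp (- (u * U_rate a \<phi>)) / (2 * pi * sqrt a)"
    using s assms(1) by (simp add: field_simps)
  finally show ?thesis
    unfolding t_def s_def .
qed

lemma U_density_eq_U_laplace:
  assumes a: "a > 0" and u: "u > 0"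
  shows "U_density a u = U_laplace a 0 u / (2 * pi * sqrt a)"
proof -
  define f where "f t = chi2_1_density t * scaled_chi2_1_density a (u - t)" for t
  define g where "g \<phi> = u * (1 - cos \<phi>) / 2" for \<phi> :: real
  define g' where "g' \<phi> = u * sin \<phi> / 2" for \<phi> :: real
  define E where "E \<phi> = exp (- (u * U_rate a \<phi>)) / (2 * pi * sqrt a)" for \<phi>
  have fg: "f (g \<phi>) * g' \<phi> = E \<phi>" if "0 < \<phi>" "\<phi> < pi" for \<phi>
    unfolding f_def g_def g'_def E_def using U_integrand_arc_substitution[OF a u that] by simp
  have E_integrable: "set_integrable lborel {0..pi} E"
    unfolding set_integrable_def E_def
    by (rule borel_integrable_compact) (use a in \<open>auto intro!: continuous_intros\<close>)
  have "set_integrable lborel {0<..<pi} E"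
    by (rule set_integrable_subset[OF E_integrable]) auto
  moreover have "set_integrable lborel {0<..<pi} (\<lambda>\<phi>. f (g \<phi>) * g' \<phi>) = set_integrable lborel {0<..<pi} E"
    by (rule set_integrable_cong) (auto simp: fg)
  ultimately have "set_integrable lborel {0<..<pi} (\<lambda>\<phi>. f (g \<phi>) * g' \<phi>)"
    by simp
  then have "(LBINT t=0..u. f t) = (LBINT \<phi>=0..pi. f (g \<phi>) * g' \<phi>)"
    unfolding zero_ereal_def
  proof (intro interval_integral_substitution_nonneg(2)[where g = g and g' = g'])
    show "(g has_real_derivative g' \<phi>) (at \<phi>)" for \<phi>
      unfolding g_def g'_def by (auto intro!: derivative_eq_intros)
    show "isCont f (g \<phi>)" if "ereal 0 < ereal \<phi>" "ereal \<phi> < ereal pi" for \<phi>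
      using isCont_U_integrand[OF a] arc_substitution_range[OF u] that unfolding f_def g_def by simp
    show "isCont g' \<phi>" for \<phi>
      unfolding g'_def by (auto intro!: continuous_intros)
    show "0 \<le> f t" for t
      unfolding f_def scaled_chi2_1_density_def
      using a by (intro mult_nonneg_nonneg divide_nonneg_pos chi2_1_density_nonneg) auto
    show "0 \<le> g' \<phi>" if "ereal 0 \<le> ereal \<phi>" "ereal \<phi> \<le> ereal pi" for \<phi>
      unfolding g'_def using that u sin_ge_zero by simp
    show "((ereal \<circ> g \<circ> real_of_ereal) \<longlongrightarrow> ereal 0) (at_right (ereal 0))"
      unfolding ereal_tendsto_simps g_def by (auto intro!: tendsto_eq_intros)
    show "((ereal \<circ> g \<circ> real_of_ereal) \<longlongrightarrow> ereal u) (at_left (ereal pi))"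
      unfolding ereal_tendsto_simps g_def by (auto intro!: tendsto_eq_intros)
  qed (auto simp: zero_ereal_def)
  also have "\<dots> = (LBINT \<phi>=0..pi. E \<phi>)"
    by (rule interval_integral_cong) (auto simp: fg zero_ereal_def)
  also have "\<dots> = integral {0..pi} E"
    unfolding zero_ereal_def using E_integrable by (intro interval_integral_eq_integral) auto
  also have "\<dots> = U_laplace a 0 u / (2 * pi * sqrt a)"
    unfolding E_def U_laplace_def integral_divide by simp
  finally show ?thesis
    unfolding f_def U_density_eq_interval_integral[OF a u] .
qed

lemma U_density_has_real_derivative:
  assumes "a > 0" "u > 0"
  shows "(U_density a has_real_derivative U_laplace a 1 u / (2 * pi * sqrt a)) (at u)"
proof (rule has_field_derivative_transform_within_open[where S = "{0<..}"])
  show "((\<lambda>u. U_laplace a 0 u / (2 * pi * sqrt a)) has_real_derivative U_laplace a 1 u / (2 * pi * sqrt a)) (at u)"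
    using assms U_laplace_has_real_derivative[of a 0 u] by (auto intro!: derivative_eq_intros)
qed (use assms U_density_eq_U_laplace in auto)

lemma deriv_U_density:
  "a > 0 \<Longrightarrow> u > 0 \<Longrightarrow> deriv (U_density a) u = U_laplace a 1 u / (2 * pi * sqrt a)"
  by (rule DERIV_imp_deriv[OF U_density_has_real_derivative])

lemma deriv_U_density_has_real_derivative:
  assumes "a > 0" "u > 0"
  shows "(deriv (U_density a) has_real_derivative U_laplace a 2 u / (2 * pi * sqrt a)) (at u)"
proof (rule has_field_derivative_transform_within_open[where S = "{0<..}"])
  show "((\<lambda>u. U_laplace a 1 u / (2 * pi * sqrt a)) has_real_derivative U_laplace a 2 u / (2 * pi * sqrt a)) (at u)"
    using assms U_laplace_has_real_derivative[of a 1 u]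
    by (auto intro!: derivative_eq_intros simp: numeral_2_eq_2)
qed (use assms deriv_U_density in auto)

lemma deriv_deriv_U_density:
  "a > 0 \<Longrightarrow> u > 0 \<Longrightarrow> deriv (deriv (U_density a)) u = U_laplace a 2 u / (2 * pi * sqrt a)"
  by (rule DERIV_imp_deriv[OF deriv_U_density_has_real_derivative])

lemma U_density_Turan_tendsto:
  assumes "a > 0"
  shows "((\<lambda>u. U_density a u * deriv (deriv (U_density a)) u - (deriv (U_density a) u)\<^sup>2)
           \<longlongrightarrow> (1 - 1 / a)\<^sup>2 / (128 * a)) (at_right 0)"
proof -
  define c where "c = 2 * pi * sqrt a"
  define D where "D u = U_laplace a 0 u * U_laplace a 2 u - (U_laplace a 1 u)\<^sup>2" for u
  have "c > 0"
    unfolding c_def using assms by simp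
  have c2: "c\<^sup>2 = 4 * pi\<^sup>2 * a"
    unfolding c_def using assms by (simp add: power_mult_distrib)
  have "isCont D 0"
    unfolding D_def by (intro continuous_intros)
  then have "((\<lambda>u. D u / c\<^sup>2) \<longlongrightarrow> D 0 / c\<^sup>2) (at_right 0)"
    by (intro tendsto_divide tendsto_const tendsto_within_subset[OF isCont_def[THEN iffD1]])
       (use \<open>c > 0\<close> in auto)
  moreover have "D 0 / c\<^sup>2 = (1 - 1 / a)\<^sup>2 / (128 * a)"
    unfolding D_def U_laplace_Turan_at_0[OF assms] c2
    using assms by (simp add: power2_eq_square field_simps)
  moreover have "\<forall>\<^sub>F u in at_right 0.
      D u / c\<^sup>2 = U_density a u * deriv (deriv (U_density a)) u - (deriv (U_density a) u)\<^sup>2"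
    using eventually_at_right_less[of 0]
  proof eventually_elim
    case (elim u)
    then show ?case
      unfolding U_density_eq_U_laplace[OF assms elim] deriv_U_density[OF assms elim]
        deriv_deriv_U_density[OF assms elim] D_def c_def[symmetric]
      using \<open>c > 0\<close> by (simp add: power2_eq_square field_simps)
  qed
  ultimately show ?thesis
    using Lim_transform_eventually by fastforce
qed

lemma not_log_concave_on_U_density:
  assumes "a > 1"
  shows "\<not> log_concave_on {0<..} (U_density a)"
proof -
  have a: "a > 0" "a \<ge> 1"
    using assms by auto
  have "0 < (1 - 1 / a)\<^sup>2 / (128 * a)"
    using assms by simp
  then have "\<forall>\<^sub>F u in at_right 0. U_density a u * deriv (deriv (U_density a)) u - (deriv (U_density a) u)\<^sup>2 > 0"
    using order_tendstoD(1)[OF U_density_Turan_tendsto[OF a(1)]] by blast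
  then obtain b where b: "b > 0"
    and Turan: "\<And>u. 0 < u \<Longrightarrow> u < b \<Longrightarrow>
                  U_density a u * deriv (deriv (U_density a)) u - (deriv (U_density a) u)\<^sup>2 > 0"
    unfolding eventually_at_right_field by auto
  show ?thesis
  proof (rule not_log_concave_on_if_Turan_pos[of "b / 3" "2 * b / 3"])
    fix t assume t: "t \<in> {b / 3..2 * b / 3}"
    then have t: "0 < t" "t < b"
      using b by auto
    show "U_density a t > 0"
      using U_density_eq_U_laplace[OF a(1) t(1)] U_laplace_0_pos[OF a(2)] a(1) by simp
    show "(U_density a has_real_derivative deriv (U_density a) t) (at t)"
      using U_density_has_real_derivative[OF a(1) t(1)] deriv_U_density[OF a(1) t(1)] by simp
    show "(deriv (U_density a) has_real_derivative deriv (deriv (U_density a)) t) (at t)"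
      using deriv_U_density_has_real_derivative[OF a(1) t(1)] deriv_deriv_U_density[OF a(1) t(1)]
      by simp
    show "U_density a t * deriv (deriv (U_density a)) t - (deriv (U_density a) t)\<^sup>2 > 0"
      using Turan[OF t] .
  qed (use b in auto)
qed

section \<open>The distribution function of \<open>U\<close>\<close>

lemma U_cdf_eq_integral_U_laplace:
  assumes a: "a > 0" and u: "u > 0"
  shows "U_cdf a u = integral {0..u} (U_laplace a 0) / (2 * pi * sqrt a)"
proof -
  define f where "f t = U_laplace a 0 t / (2 * pi * sqrt a)" for t
  have "indicator {..u} t *\<^sub>R U_density a t = indicator {0<..u} t *\<^sub>R f t" for t
  proof (cases "t > 0")
    case True
    then show ?thesis
      using U_density_eq_U_laplace[OF a True] by (simp add: f_def indicator_def)
  next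
    case False
    then show ?thesis
      using U_density_eq_0[OF a, of t] by (simp add: indicator_def)
  qed
  then have "U_cdf a u = (LBINT t:{0<..u}. f t)"
    unfolding U_cdf_def set_lebesgue_integral_def by simp
  also have "\<dots> = integral {0<..u} f"
  proof (rule set_borel_integral_eq_integral)
    have "set_integrable lborel {0..u} f"
      unfolding set_integrable_def f_def
      by (rule borel_integrable_compact) (use a in \<open>auto intro!: continuous_intros\<close>)
    then show "set_integrable lborel {0<..u} f"
      by (rule set_integrable_subset) auto
  qed
  also have "\<dots> = integral {0..u} f"
    by (rule integral_subset_negligible) (auto intro: negligible_subset[of "{0}"])
  finally show ?thesis
    unfolding f_def integral_divide .
qed

lemma U_cdf_has_real_derivative:
  assumes a: "a > 0" and u: "u > 0"
  shows "(U_cdf a has_real_derivative U_density a u) (at u)"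
proof (rule has_field_derivative_transform_within_open[where S = "{0<..}"])
  have "((\<lambda>x. integral {0..x} (U_laplace a 0)) has_real_derivative U_laplace a 0 u) (at u within {0..u + 1})"
    by (rule integral_has_real_derivative) (use u in \<open>auto intro: continuous_on_U_laplace\<close>)
  then have "((\<lambda>x. integral {0..x} (U_laplace a 0)) has_real_derivative U_laplace a 0 u) (at u)"
    using at_within_Icc_at[of 0 u "u + 1"] u by simp
  then show "((\<lambda>x. integral {0..x} (U_laplace a 0) / (2 * pi * sqrt a)) has_real_derivative U_density a u) (at u)"
    unfolding U_density_eq_U_laplace[OF a u] by (rule DERIV_cdivide)
qed (use u U_cdf_eq_integral_U_laplace[OF a] in simp_all)

lemma U_cdf_pos:
  assumes a: "a \<ge> 1" and u: "u > 0"
  shows "U_cdf a u > 0"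
proof -
  have "integral {0..u} (\<lambda>t. pi * exp (- u)) \<le> integral {0..u} (U_laplace a 0)"
  proof (rule integral_le)
    fix t assume "t \<in> {0..u}"
    then have "pi * exp (- u) \<le> pi * exp (- \<bar>t\<bar>)"
      by simp
    also have "\<dots> \<le> U_laplace a 0 t"
      by (rule U_laplace_0_lower_bound[OF a])
    finally show "pi * exp (- u) \<le> U_laplace a 0 t" .
  qed (auto intro!: integrable_continuous_interval continuous_intros)
  moreover have "integral {0..u} (\<lambda>t. pi * exp (- u)) = u * (pi * exp (- u))"
    using u by simp
  moreover have "0 < u * (pi * exp (- u))"
    using u by simp
  ultimately have "0 < integral {0..u} (U_laplace a 0)"
    by linarith
  moreover have "a > 0"
    using a by simp
  ultimately show ?thesis
    using U_cdf_eq_integral_U_laplace[OF _ u] by simp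
qed

lemma log_concave_on_U_cdf:
  assumes "a > 1"
  shows "log_concave_on {0<..} (U_cdf a)"
proof (rule concave_on_imp_log_concave_on)
  have a: "a > 0" "a \<ge> 1"
    using assms by auto
  show "concave_on {0<..} (U_cdf a)"
  proof (rule f''_le0_imp_concave)
    show "(U_cdf a has_real_derivative U_density a u) (at u)" if "u \<in> {0<..}" for u
      using U_cdf_has_real_derivative[OF a(1)] that by simp
    show "(U_density a has_real_derivative U_laplace a 1 u / (2 * pi * sqrt a)) (at u)" if "u \<in> {0<..}" for u
      using U_density_has_real_derivative[OF a(1)] that by simp
    show "U_laplace a 1 u / (2 * pi * sqrt a) \<le> 0" for u
      using U_laplace_1_nonpos[OF a(2)] a(1) by (simp add: divide_nonpos_pos)
  qed simp
  show "U_cdf a u > 0" if "u \<in> {0<..}" for u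
    using U_cdf_pos[OF a(2)] that by simp
qed

theorem mainTheorem12:
  fixes a2 c2 p0 p1 p2 :: real
  assumes "a2 > 1"
    and "c2 = 1 - 1 / a2"
    and "p0 = a2 powr (- 1 / 2)"
    and "p1 = 1 / 2 * c2 * p0"
    and "p2 = 3 / 8 * c2 ^ 2 * p0"
  shows "((\<lambda>u. U_density a2 u * deriv (deriv (U_density a2)) u - (deriv (U_density a2) u)^2)
            \<longlongrightarrow> (p0 * p2 - p1 ^ 2) / 16) (at_right 0)
      \<and> (p0 * p2 - p1 ^ 2) / 16 > 0
      \<and> \<not> log_concave_on {0<..} (U_density a2)
      \<and> log_concave_on {0<..} (U_cdf a2)"
proof -
  have a: "a2 > 0"
    using assms(1) by simp
  have "p0\<^sup>2 = 1 / a2"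
    unfolding assms(3) using a by (simp add: powr_minus_divide powr_half_sqrt power_divide)
  moreover have "(p0 * p2 - p1 ^ 2) / 16 = c2\<^sup>2 * p0\<^sup>2 / 128"
    unfolding assms(4,5) by (simp add: power2_eq_square field_simps)
  ultimately have "(p0 * p2 - p1 ^ 2) / 16 = (1 - 1 / a2)\<^sup>2 / (128 * a2)"
    unfolding assms(2) by simp
  moreover have "(1 - 1 / a2)\<^sup>2 / (128 * a2) > 0"
    using assms(1) by simp
  ultimately show ?thesis
    using U_density_Turan_tendsto[OF a] not_log_concave_on_U_density[OF assms(1)]
      log_concave_on_U_cdf[OF assms(1)]
    by simp
qed

end
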